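(* Let $f$ satisfy the hypotheses of Theorem 1 (bounded below by $f^*$, smooth with constants $L_1,\dots,L_d$, $\bar L=\frac1d\sum_iL_i$), and suppose that at every $x$ the estimator $\hat g(x)$ is unbiased and each coordinate $\hat g_i(x)$ has a unimodal distribution symmetric about $g_i(x)$ with variance $\sigma_i^2(x)$. Run signSGD $x_{k+1}=x_k-\gamma\,\mathrm{sign}\,\hat g(x_k)$ for $K\ge1$ iterations with constant step $\gamma=\sqrt{\frac{2(f(x_0)-f^* )}{d\bar LK}}$ (assume $f(x_0)>f^*$). Writing $g_k=\nabla f(x_k)$, $\sigma_i=\sigma_i(x_k)$ and $H_k=\{i:\sigma_i<\frac{\sqrt3}{2}|g_{k,i}|\}$, one has $$\frac1K\sum_{k=0}^{K-1}\mathbb{E}\left[\sum_{i\in H_k}|g_{k,i}|+\sum_{i\notin H_k}\frac{g_{k,i}^2}{\sigma_i}\right]\le5\sqrt{\frac{d\bar L(f(x_0)-f^* )}{K}}.$$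
   Context: $\mathrm{sign}\,t=1,0,-1$ for $t>0,t=0,t<0$, entrywise. Convention: a term $g_{k,i}^2/\sigma_i$ with $g_{k,i}=\sigma_i=0$ is taken to be $0$. *)

theory Defs
  imports "HOL-Probability.Probability"
begin

definition sgn_vec :: "real ^ 'n \<Rightarrow> real ^ 'n" where
  "sgn_vec v = (\<chi> i. sgn (v $ i))"

definition cdf_of :: "real measure \<Rightarrow> real \<Rightarrow> real" where
  "cdf_of \<mu> t = measure \<mu> {..t}"

definition unimodal :: "real measure \<Rightarrow> bool" where
  "unimodal \<mu> \<longleftrightarrow> (\<exists>c. convex_on {..<c} (cdf_of \<mu>) \<and> concave_on {c<..} (cdf_of \<mu>))"

definition symmetric_about :: "real measure \<Rightarrow> real \<Rightarrow> bool" where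
  "symmetric_about \<mu> m \<longleftrightarrow> distr \<mu> borel (\<lambda>t. 2 * m - t) = \<mu>"

definition signsgd_step ::
  "(real ^ 'n \<Rightarrow> (real ^ 'n) measure) \<Rightarrow> real \<Rightarrow> real ^ 'n \<Rightarrow> (real ^ 'n) measure" where
  "signsgd_step Q \<gamma> x = distr (Q x) borel (\<lambda>v. x - \<gamma> *\<^sub>R sgn_vec v)"

text \<open>Distribution of the k-th signSGD iterate x_k started at x0 (fresh, independent
  gradient noise at every step, i.e. the Markov chain driven by the kernel Q).\<close>
primrec signsgd_dist ::
  "(real ^ 'n \<Rightarrow> (real ^ 'n) measure) \<Rightarrow> real \<Rightarrow> real ^ 'n \<Rightarrow> nat \<Rightarrow> (real ^ 'n) measure" where
  "signsgd_dist Q \<gamma> x0 0 = return borel x0"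
| "signsgd_dist Q \<gamma> x0 (Suc k) = signsgd_dist Q \<gamma> x0 k \<bind> signsgd_step Q \<gamma>"

end

theory Submission
  imports Defs
begin

text \<open>By smoothness, one signSGD step from x lowers f by at least
  \<gamma> \<Sum>i. g_i E[sgn \<hat>g_i] - \<gamma>^2 (\<Sum>i. L_i) / 2. Symmetry of \<hat>g_i about g_i gives
  g_i E[sgn \<hat>g_i] \<ge> |g_i| P(|\<hat>g_i - g_i| < |g_i|). Unimodality makes the central mass
  x \<mapsto> P(|\<hat>g_i - g_i| \<le> x) concave on (0, \<infinity>), Chebyshev's inequality puts mass at least 2/3
  within \<surd>3 \<sigma>_i, and together these bound the correlation below by |g_i|/3 or g_i^2/(3 \<sigma>_i).
  Telescoping the expected descent over K steps against f \<ge> f* and inserting the step size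
  gives the rate with constant 3\<surd>2 \<le> 5.\<close>

definition sign_progress :: "real \<Rightarrow> real \<Rightarrow> real" where
  "sign_progress g s = (if s < sqrt 3 / 2 * \<bar>g\<bar> then \<bar>g\<bar> else g\<^sup>2 / s)"

lemma sign_progress_zero [simp]: "sign_progress 0 s = 0"
  by (simp add: sign_progress_def)

lemma convex_on_comp_affine:
  fixes f :: "real \<Rightarrow> real"
  assumes f: "convex_on S f" and T: "convex T" and maps: "\<And>x. x \<in> T \<Longrightarrow> a + b * x \<in> S"
  shows "convex_on T (\<lambda>x. f (a + b * x))"
proof (rule convex_onI[OF _ T])
  fix t x y :: real assume t: "0 < t" "t < 1" and xy: "x \<in> T" "y \<in> T"
  have "a + b * ((1 - t) *\<^sub>R x + t *\<^sub>R y) = (1 - t) *\<^sub>R (a + b * x) + t *\<^sub>R (a + b * y)"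
    by (simp add: algebra_simps)
  then show "f (a + b * ((1 - t) *\<^sub>R x + t *\<^sub>R y)) \<le> (1 - t) * f (a + b * x) + t * f (a + b * y)"
    using convex_onD[OF f, of t] t xy maps by simp
qed

lemma concave_on_comp_affine:
  fixes f :: "real \<Rightarrow> real"
  assumes "concave_on S f" and "convex T" and "\<And>x. x \<in> T \<Longrightarrow> a + b * x \<in> S"
  shows "concave_on T (\<lambda>x. f (a + b * x))"
  using assms convex_on_comp_affine[of S "\<lambda>x. - f x" T a b] by (simp add: concave_on_def)

lemma concave_on_pos_ratio_le:
  fixes \<phi> :: "real \<Rightarrow> real"
  assumes conc: "concave_on {0<..} \<phi>" and nonneg: "\<And>x. x > 0 \<Longrightarrow> 0 \<le> \<phi> x"
    and a: "0 < a" "a \<le> s"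
  shows "a * \<phi> s \<le> s * \<phi> a"
proof (rule tendsto_le[of "at_right 0"])
  show "((\<lambda>e. (s - e) * \<phi> a) \<longlongrightarrow> s * \<phi> a) (at_right 0)"
    "((\<lambda>e. (a - e) * \<phi> s) \<longlongrightarrow> a * \<phi> s) (at_right 0)"
    by (auto intro!: tendsto_eq_intros)
  show "\<forall>\<^sub>F e in at_right 0. (a - e) * \<phi> s \<le> (s - e) * \<phi> a"
    using eventually_at_right_real[OF \<open>0 < a\<close>]
  proof eventually_elim
    case (elim e)
    define t where "t = (a - e) / (s - e)"
    have t: "0 \<le> t" "t \<le> 1" "(s - e) * t = a - e" "(s - e) * (1 - t) = s - a"
      using elim a by (auto simp: t_def field_simps)
    have "(1 - t) *\<^sub>R e + t *\<^sub>R s = a"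
      using t(3) by (simp add: algebra_simps)
    then have "(1 - t) * \<phi> e + t * \<phi> s \<le> \<phi> a"
      using concave_onD[OF conc t(1,2), of e s] elim a by simp
    then have "(s - e) * ((1 - t) * \<phi> e + t * \<phi> s) \<le> (s - e) * \<phi> a"
      using elim a by (intro mult_left_mono) auto
    moreover have "(s - e) * ((1 - t) * \<phi> e + t * \<phi> s) = ((s - e) * (1 - t)) * \<phi> e + ((s - e) * t) * \<phi> s"
      by (simp add: algebra_simps)
    moreover have "0 \<le> (s - a) * \<phi> e" using nonneg[of e] elim a by simp
    ultimately show ?case using t(3,4) by simp
  qed
qed simp

lemma concave_mass_function_bound:
  fixes \<phi> :: "real \<Rightarrow> real"
  assumes M: "M > 0" and \<sigma>: "\<sigma> \<ge> 0"
    and conc: "concave_on {0<..} \<phi>" and nonneg: "\<And>x. x > 0 \<Longrightarrow> 0 \<le> \<phi> x"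
    and cheb: "\<And>x. x > 0 \<Longrightarrow> 1 - \<sigma>\<^sup>2 / x\<^sup>2 \<le> \<phi> x"
    and Y: "\<And>a. 0 < a \<Longrightarrow> a < M \<Longrightarrow> \<phi> a \<le> Y"
  shows "1/3 * sign_progress M \<sigma> \<le> M * Y"
proof -
  \<comment> \<open>Testing at a = 9M/10 rather than letting a tend to M is good enough because \<surd>3 < 1.8.\<close>
  define a where "a = 9/10 * M"
  have a: "0 < a" "a < M" using M by (auto simp: a_def)
  have Ya: "\<phi> a \<le> Y" using Y a by blast
  have sqrt3: "sqrt (3::real) < 1.8" by (rule real_less_lsqrt) (simp_all add: power2_eq_square)
  show ?thesis
  proof (cases "\<sigma> = 0")
    case True
    then show ?thesis using cheb[OF a(1)] Ya M by (simp add: sign_progress_def)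
  next
    case False
    with \<sigma> have \<sigma>_pos: "\<sigma> > 0" by simp
    define s where "s = sqrt 3 * \<sigma>"
    have s_pos: "s > 0" using \<sigma>_pos by (simp add: s_def)
    have \<sigma>s: "\<sigma>\<^sup>2 / s\<^sup>2 = 1/3" using \<sigma>_pos by (simp add: s_def power_mult_distrib)
    have \<phi>s: "2/3 \<le> \<phi> s" using cheb[OF s_pos] unfolding \<sigma>s by simp
    show ?thesis
    proof (cases "s \<le> a")
      case True
      have "\<sigma>\<^sup>2 / a\<^sup>2 \<le> \<sigma>\<^sup>2 / s\<^sup>2"
        using True s_pos \<sigma>_pos by (intro divide_left_mono power_mono) auto
      then have "2/3 \<le> Y" using cheb[OF a(1)] Ya \<sigma>s by linarith
      moreover have "\<sigma> < sqrt 3 / 2 * M"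
      proof -
        have "\<sigma> = sqrt 3 * s / 3" by (simp add: s_def)
        also have "\<dots> \<le> sqrt 3 * (9/10 * M) / 3" using True by (simp add: a_def)
        also have "\<dots> < sqrt 3 / 2 * M" using M by simp
        finally show ?thesis .
      qed
      ultimately show ?thesis using M by (simp add: sign_progress_def)
    next
      case False
      have "a * (2/3) \<le> s * \<phi> a"
        using concave_on_pos_ratio_le[OF conc nonneg a(1)] False \<phi>s a(1) by (smt (verit) mult_left_mono)
      also have "s * \<phi> a \<le> s * Y" using Ya s_pos by simp
      finally have aY: "2/3 * a \<le> s * Y" by simp
      show ?thesis
      proof (cases "\<sigma> < sqrt 3 / 2 * M")
        case True
        have "s < sqrt 3 * (sqrt 3 / 2 * M)" using True unfolding s_def by simp
        then have "2 * s < 3 * M" by (simp add: mult.assoc[symmetric])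
        then have "s * (1/3) \<le> s * Y" using aY M unfolding a_def by linarith
        then show ?thesis using True s_pos M by (simp add: sign_progress_def)
      next
        case False
        have "s * (M / (3 * \<sigma>)) \<le> 2/3 * a"
          using sqrt3 M \<sigma>_pos unfolding s_def a_def by (simp add: field_simps)
        then have "M / (3 * \<sigma>) \<le> Y" using aY s_pos by (smt (verit) mult_le_cancel_left_pos)
        then have "M * (M / (3 * \<sigma>)) \<le> M * Y" using M by (intro mult_left_mono) auto
        then show ?thesis using False M by (simp add: sign_progress_def power2_eq_square)
      qed
    qed
  qed
qed

lemma symmetric_about_measure_reflect:
  fixes \<mu> :: "real measure"
  assumes sets: "sets \<mu> = sets borel" and sym: "symmetric_about \<mu> m" and A: "A \<in> sets borel"
  shows "measure \<mu> ((\<lambda>t. 2 * m - t) -` A) = measure \<mu> A"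
proof -
  have "(\<lambda>t. 2 * m - t) \<in> \<mu> \<rightarrow>\<^sub>M borel"
    by (simp add: measurable_cong_sets[OF sets refl])
  then have "measure (distr \<mu> borel (\<lambda>t. 2 * m - t)) A = measure \<mu> ((\<lambda>t. 2 * m - t) -` A)"
    using A sets_eq_imp_space_eq[OF sets] by (simp add: measure_distr)
  then show ?thesis using sym by (simp add: symmetric_about_def)
qed

lemma integral_sgn_real:
  fixes \<mu> :: "real measure"
  assumes "prob_space \<mu>" and sets: "sets \<mu> = sets borel"
  shows "(\<integral>t. sgn t \<partial>\<mu>) = measure \<mu> {0<..} - measure \<mu> {..<0}"
proof -
  interpret prob_space \<mu> by fact
  have "(\<lambda>t::real. sgn t) = (\<lambda>t. indicator {0<..} t - indicator {..<0} t)"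
    by (auto simp: indicator_def fun_eq_iff)
  then show ?thesis using sets
    by (simp add: Bochner_Integration.integral_diff integrable_indicator emeasure_eq_measure)
qed

lemma symmetric_about_sgn_ge_central_mass:
  fixes \<mu> :: "real measure"
  assumes prob: "prob_space \<mu>" and sets: "sets \<mu> = sets borel" and sym: "symmetric_about \<mu> m"
  shows "\<bar>m\<bar> * measure \<mu> {t. \<bar>t - m\<bar> < \<bar>m\<bar>} \<le> m * (\<integral>t. sgn t \<partial>\<mu>)"
proof -
  interpret prob_space \<mu> by fact
  define B where "B = {t. \<bar>t - m\<bar> < \<bar>m\<bar>}"
  have B: "B \<in> sets \<mu>" unfolding B_def sets by measurable
  note reflect = symmetric_about_measure_reflect[OF sets sym]
  consider "m > 0" | "m = 0" | "m < 0" by linarith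
  then show ?thesis
  proof cases
    case 1
    have "(\<lambda>t. 2 * m - t) -` {..<0} = {2 * m<..}" by auto
    then have neg: "measure \<mu> {..<0} = measure \<mu> {2 * m<..}" using reflect[of "{..<0}"] by simp
    have "measure \<mu> B + measure \<mu> {2 * m<..} = measure \<mu> (B \<union> {2 * m<..})"
      using 1 B sets by (intro finite_measure_Union[symmetric]) (auto simp: B_def)
    also have "\<dots> \<le> measure \<mu> {0<..}"
      using 1 sets by (intro finite_measure_mono) (auto simp: B_def)
    finally have "m * measure \<mu> B \<le> m * (measure \<mu> {0<..} - measure \<mu> {..<0})"
      using 1 neg by (intro mult_left_mono) auto
    then show ?thesis using 1 integral_sgn_real[OF prob sets] by (simp add: B_def)
  next
    case 3
    have "(\<lambda>t. 2 * m - t) -` {0<..} = {..<2 * m}" by auto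
    then have pos: "measure \<mu> {0<..} = measure \<mu> {..<2 * m}" using reflect[of "{0<..}"] by simp
    have "measure \<mu> B + measure \<mu> {..<2 * m} = measure \<mu> (B \<union> {..<2 * m})"
      using 3 B sets by (intro finite_measure_Union[symmetric]) (auto simp: B_def)
    also have "\<dots> \<le> measure \<mu> {..<0}"
      using 3 sets by (intro finite_measure_mono) (auto simp: B_def)
    finally have "(- m) * measure \<mu> B \<le> (- m) * (measure \<mu> {..<0} - measure \<mu> {0<..})"
      using 3 pos by (intro mult_left_mono) auto
    then show ?thesis using 3 by (simp add: B_def integral_sgn_real[OF prob sets] algebra_simps)
  qed simp
qed

text \<open>The cdf is concave to the right of the mode and convex to its left, so one of the
  two maps x \<mapsto> P(|t - m| \<le> x) = 2 F(m + x) - 1 and x \<mapsto> P(|t - m| < x) = 1 - 2 F(m - x)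
  is concave on the positive reals, depending on which side of m the mode lies.\<close>
lemma symmetric_unimodal_central_mass_concave:
  fixes \<mu> :: "real measure"
  assumes "prob_space \<mu>" and sets: "sets \<mu> = sets borel"
    and uni: "unimodal \<mu>" and sym: "symmetric_about \<mu> m"
  obtains \<phi> where "concave_on {0<..} \<phi>"
    and "\<And>x. x > 0 \<Longrightarrow> measure \<mu> {t. \<bar>t - m\<bar> < x} \<le> \<phi> x"
    and "\<And>x. x > 0 \<Longrightarrow> \<phi> x \<le> measure \<mu> {t. \<bar>t - m\<bar> \<le> x}"
proof -
  interpret prob_space \<mu> by fact
  define F where "F = cdf_of \<mu>"
  have F: "F t = measure \<mu> {..t}" for t by (simp add: F_def cdf_of_def)
  have space: "space \<mu> = UNIV" using sets_eq_imp_space_eq[OF sets] by simp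
  note reflect = symmetric_about_measure_reflect[OF sets sym]
  obtain c where cvx: "convex_on {..<c} F" and ccv: "concave_on {c<..} F"
    using uni unfolding unimodal_def F_def by blast
  have mono: "measure \<mu> {t. \<bar>t - m\<bar> < x} \<le> measure \<mu> {t. \<bar>t - m\<bar> \<le> x}" for x
    using sets by (intro finite_measure_mono) auto
  show thesis
  proof (cases "c \<le> m")
    case True
    have "concave_on {0<..} (\<lambda>x. 2 * F (m + 1 * x) - 1)"
      using True by (intro concave_on_diff concave_on_cmul concave_on_comp_affine[OF ccv])
        (auto simp: convex_on_const)
    moreover have "2 * F (m + 1 * x) - 1 = measure \<mu> {t. \<bar>t - m\<bar> \<le> x}" if "x > 0" for x
    proof -
      have "(\<lambda>t. 2 * m - t) -` {m + x<..} = {..<m - x}" by auto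
      then have "measure \<mu> {..<m - x} = measure \<mu> {m + x<..}" using reflect[of "{m + x<..}"] by simp
      also have "\<dots> = 1 - F (m + x)"
        using sets space by (simp add: F prob_compl[symmetric] Compl_eq_Diff_UNIV[symmetric] Compl_atMost)
      finally have "measure \<mu> {..<m - x} = 1 - F (m + x)" .
      moreover have "{t. \<bar>t - m\<bar> \<le> x} = {..m + x} - {..<m - x}" using that by auto
      ultimately show ?thesis
        using that sets by (simp add: F) (subst finite_measure_Diff; auto)
    qed
    ultimately show thesis using mono by (intro that[of "\<lambda>x. 2 * F (m + 1 * x) - 1"]) auto
  next
    case False
    have "concave_on {0<..} (\<lambda>x. 1 - 2 * F (m + (- 1) * x))"
      using False by (intro concave_on_diff convex_on_cmul convex_on_comp_affine[OF cvx])
        (auto simp: concave_on_const)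
    moreover have "1 - 2 * F (m + (- 1) * x) = measure \<mu> {t. \<bar>t - m\<bar> < x}" if "x > 0" for x
    proof -
      have "(\<lambda>t. 2 * m - t) -` {..m - x} = {m + x..}" by auto
      then have "measure \<mu> {m + x..} = F (m - x)" using reflect[of "{..m - x}"] by (simp add: F)
      moreover have "{t. \<bar>t - m\<bar> < x} = space \<mu> - ({..m - x} \<union> {m + x..})" using that space by auto
      ultimately show ?thesis
        using that sets by (simp add: F prob_compl) (subst finite_measure_Union; auto)
    qed
    ultimately show thesis using mono by (intro that[of "\<lambda>x. 1 - 2 * F (m + (- 1) * x)"]) auto
  qed
qed

lemma symmetric_unimodal_sgn_bound:
  fixes \<mu> :: "real measure"
  assumes prob: "prob_space \<mu>" and sets: "sets \<mu> = sets borel"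
    and uni: "unimodal \<mu>" and sym: "symmetric_about \<mu> m"
    and \<sigma>: "\<sigma> \<ge> 0" and mean: "(\<integral>t. t \<partial>\<mu>) = m"
    and sq: "integrable \<mu> (\<lambda>t. t\<^sup>2)" and var: "(\<integral>t. (t - m)\<^sup>2 \<partial>\<mu>) = \<sigma>\<^sup>2"
  shows "1/3 * sign_progress m \<sigma> \<le> m * (\<integral>t. sgn t \<partial>\<mu>)"
proof (cases "m = 0")
  case True
  then show ?thesis by (simp add: sign_progress_def)
next
  case False
  interpret prob_space \<mu> by fact
  have space: "space \<mu> = UNIV" using sets_eq_imp_space_eq[OF sets] by simp
  have cheb: "1 - \<sigma>\<^sup>2 / x\<^sup>2 \<le> measure \<mu> {t. \<bar>t - m\<bar> < x}" if "x > 0" for x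
  proof -
    have "random_variable borel (\<lambda>t::real. t)" by (simp add: measurable_cong_sets[OF sets refl])
    from Chebyshev_inequality[OF this sq that]
    have "measure \<mu> {t. x \<le> \<bar>t - m\<bar>} \<le> \<sigma>\<^sup>2 / x\<^sup>2" using mean var space by simp
    moreover have "{t. \<bar>t - m\<bar> < x} = space \<mu> - {t. x \<le> \<bar>t - m\<bar>}" using space by auto
    ultimately show ?thesis using sets by (simp add: prob_compl)
  qed
  obtain \<phi> where conc: "concave_on {0<..} \<phi>"
    and lower: "\<And>x. x > 0 \<Longrightarrow> measure \<mu> {t. \<bar>t - m\<bar> < x} \<le> \<phi> x"
    and upper: "\<And>x. x > 0 \<Longrightarrow> \<phi> x \<le> measure \<mu> {t. \<bar>t - m\<bar> \<le> x}"
    using symmetric_unimodal_central_mass_concave[OF prob sets uni sym] by blast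
  have "1/3 * sign_progress \<bar>m\<bar> \<sigma> \<le> \<bar>m\<bar> * measure \<mu> {t. \<bar>t - m\<bar> < \<bar>m\<bar>}"
  proof (rule concave_mass_function_bound[OF _ \<sigma> conc])
    show "0 \<le> \<phi> x" if "x > 0" for x using lower[OF that] measure_nonneg order_trans by blast
    show "1 - \<sigma>\<^sup>2 / x\<^sup>2 \<le> \<phi> x" if "x > 0" for x using cheb[OF that] lower[OF that] by simp
    show "\<phi> a \<le> measure \<mu> {t. \<bar>t - m\<bar> < \<bar>m\<bar>}" if "0 < a" "a < \<bar>m\<bar>" for a
    proof -
      have "measure \<mu> {t. \<bar>t - m\<bar> \<le> a} \<le> measure \<mu> {t. \<bar>t - m\<bar> < \<bar>m\<bar>}"
        using that sets by (intro finite_measure_mono) auto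
      then show ?thesis using upper[OF that(1)] by linarith
    qed
  qed (use False in simp)
  moreover have "sign_progress \<bar>m\<bar> \<sigma> = sign_progress m \<sigma>" by (simp add: sign_progress_def)
  ultimately show ?thesis
    using symmetric_about_sgn_ge_central_mass[OF prob sets sym] by linarith
qed

lemma borel_measurable_vec_nth [measurable]: "(\<lambda>v::real^'n. v $ i) \<in> borel_measurable borel"
  by (intro borel_measurable_continuous_onI continuous_intros)

lemma borel_measurable_sgn_vec [measurable]: "sgn_vec \<in> borel_measurable (borel :: (real^'n) measure)"
proof -
  have "(\<lambda>v. sgn_vec v \<bullet> b) \<in> borel_measurable borel" if "b \<in> Basis" for b :: "real^'n"
  proof -
    obtain i where "b = axis i 1" using \<open>b \<in> Basis\<close> by (auto simp: Basis_vec_def)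
    then have "(\<lambda>v. sgn_vec v \<bullet> b) = (\<lambda>v. sgn (v $ i))" by (simp add: inner_axis sgn_vec_def)
    then show ?thesis by simp
  qed
  then show ?thesis using borel_measurable_euclidean_space by blast
qed

lemma prob_algebra_memD:
  assumes "N \<in> space (prob_algebra M)"
  shows "prob_space N" and "sets N = sets M"
  using assms by (simp_all add: space_prob_algebra)

lemma signsgd_step_kernel:
  assumes kernel: "Q \<in> borel \<rightarrow>\<^sub>M prob_algebra borel"
  shows "signsgd_step Q \<gamma> \<in> (borel :: (real^'n) measure) \<rightarrow>\<^sub>M prob_algebra borel"
  unfolding signsgd_step_def
proof (rule measurable_prob_algebraI)
  show "(\<lambda>x. distr (Q x) borel (\<lambda>v. x - \<gamma> *\<^sub>R sgn_vec v)) \<in> borel \<rightarrow>\<^sub>M subprob_algebra borel"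
  proof (rule measurable_distr2[where M=borel])
    show "(\<lambda>(x, v). x - \<gamma> *\<^sub>R sgn_vec v) \<in> borel \<Otimes>\<^sub>M borel \<rightarrow>\<^sub>M (borel :: (real^'n) measure)"
      by measurable
  qed (rule measurable_prob_algebraD[OF kernel])
  fix x :: "real^'n"
  have Qx: "prob_space (Q x)" "sets (Q x) = sets borel"
    using prob_algebra_memD[OF measurable_space[OF kernel]] by auto
  have "(\<lambda>v. x - \<gamma> *\<^sub>R sgn_vec v) \<in> Q x \<rightarrow>\<^sub>M borel"
    by (simp add: measurable_cong_sets[OF Qx(2) refl])
  then show "prob_space (distr (Q x) borel (\<lambda>v. x - \<gamma> *\<^sub>R sgn_vec v))"
    by (rule prob_space.prob_space_distr[OF Qx(1)])
qed

lemma signsgd_dist_prob_algebra: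
  assumes "Q \<in> borel \<rightarrow>\<^sub>M prob_algebra borel"
  shows "signsgd_dist Q \<gamma> x0 k \<in> space (prob_algebra (borel :: (real^'n) measure))"
proof (induction k)
  case 0
  show ?case by (simp add: measurable_space[OF measurable_return_prob_space])
next
  case (Suc k)
  note step = signsgd_step_kernel[OF assms]
  show ?case using prob_space_bind'[OF Suc step] sets_bind'[OF Suc step]
    by (simp add: space_prob_algebra)
qed

lemma smooth_sign_step_le:
  fixes f :: "real^'n \<Rightarrow> real" and g x v :: "real^'n"
  assumes L_nonneg: "\<And>i. 0 \<le> L i"
    and smooth: "\<And>y. f y \<le> f x + g \<bullet> (y - x) + (\<Sum>i\<in>UNIV. L i / 2 * (y $ i - x $ i)\<^sup>2)"
  shows "f (x - \<gamma> *\<^sub>R sgn_vec v)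
    \<le> f x - \<gamma> * (\<Sum>i\<in>UNIV. g $ i * sgn (v $ i)) + \<gamma>\<^sup>2 * (\<Sum>i\<in>UNIV. L i) / 2"
proof -
  define y where "y = x - \<gamma> *\<^sub>R sgn_vec v"
  have "g \<bullet> (y - x) = - \<gamma> * (\<Sum>i\<in>UNIV. g $ i * sgn (v $ i))"
    by (simp add: y_def inner_vec_def sgn_vec_def sum_distrib_left algebra_simps)
  moreover have "(\<Sum>i\<in>UNIV. L i / 2 * (y $ i - x $ i)\<^sup>2) \<le> (\<Sum>i\<in>UNIV. L i / 2 * \<gamma>\<^sup>2)"
  proof (rule sum_mono)
    fix i
    have "(y $ i - x $ i)\<^sup>2 = \<gamma>\<^sup>2 * (sgn (v $ i))\<^sup>2" by (simp add: y_def sgn_vec_def power_mult_distrib)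
    also have "\<dots> \<le> \<gamma>\<^sup>2" by (simp add: sgn_real_def)
    finally show "L i / 2 * (y $ i - x $ i)\<^sup>2 \<le> L i / 2 * \<gamma>\<^sup>2"
      using L_nonneg[of i] by (intro mult_left_mono) auto
  qed
  moreover have "(\<Sum>i\<in>UNIV. L i / 2 * \<gamma>\<^sup>2) = \<gamma>\<^sup>2 * (\<Sum>i\<in>UNIV. L i) / 2"
    by (simp add: sum_distrib_right sum_divide_distrib algebra_simps)
  ultimately show ?thesis using smooth[of y] unfolding y_def by linarith
qed

lemma symmetric_unimodal_coordinate_sgn_bound:
  fixes N :: "(real^'n) measure"
  assumes prob: "prob_space N" and sets: "sets N = sets borel"
    and uni: "unimodal (distr N borel (\<lambda>v. v $ i))"
    and sym: "symmetric_about (distr N borel (\<lambda>v. v $ i)) m"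
    and \<sigma>: "\<sigma> \<ge> 0" and mean: "(\<integral>v. v $ i \<partial>N) = m"
    and sq: "integrable N (\<lambda>v. (v $ i)\<^sup>2)" and var: "(\<integral>v. (v $ i - m)\<^sup>2 \<partial>N) = \<sigma>\<^sup>2"
  shows "1/3 * sign_progress m \<sigma> \<le> m * (\<integral>v. sgn (v $ i) \<partial>N)"
proof -
  have nth: "(\<lambda>v. v $ i) \<in> N \<rightarrow>\<^sub>M borel" by (simp add: measurable_cong_sets[OF sets refl])
  have "1/3 * sign_progress m \<sigma> \<le> m * (\<integral>t. sgn t \<partial>distr N borel (\<lambda>v. v $ i))"
  proof (rule symmetric_unimodal_sgn_bound[OF _ _ uni sym \<sigma>])
    show "prob_space (distr N borel (\<lambda>v. v $ i))" by (rule prob_space.prob_space_distr[OF prob nth])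
  qed (use mean sq var in \<open>simp_all add: integral_distr integrable_distr_eq nth\<close>)
  then show ?thesis by (simp add: integral_distr nth)
qed

lemma signsgd_step_descent:
  fixes f :: "real^'n \<Rightarrow> real" and G :: "real^'n \<Rightarrow> real^'n"
    and Q :: "real^'n \<Rightarrow> (real^'n) measure" and \<sigma> :: "real^'n \<Rightarrow> 'n \<Rightarrow> real"
  assumes lower: "\<And>y. fstar \<le> f y" and f: "f \<in> borel_measurable borel"
    and L_nonneg: "\<And>i. 0 \<le> L i"
    and smooth: "\<And>y. f y \<le> f x + G x \<bullet> (y - x) + (\<Sum>i\<in>UNIV. L i / 2 * (y $ i - x $ i)\<^sup>2)"
    and Qx: "Q x \<in> space (prob_algebra borel)"
    and uni: "\<And>i. unimodal (distr (Q x) borel (\<lambda>v. v $ i))"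
    and sym: "\<And>i. symmetric_about (distr (Q x) borel (\<lambda>v. v $ i)) (G x $ i)"
    and \<sigma>: "\<And>i. \<sigma> x i \<ge> 0" and mean: "\<And>i. (\<integral>v. v $ i \<partial>Q x) = G x $ i"
    and sq: "\<And>i. integrable (Q x) (\<lambda>v. (v $ i)\<^sup>2)"
    and var: "\<And>i. (\<integral>v. (v $ i - G x $ i)\<^sup>2 \<partial>Q x) = (\<sigma> x i)\<^sup>2"
    and \<gamma>: "\<gamma> \<ge> 0"
  shows "ennreal (\<gamma> / 3) * ennreal (\<Sum>i\<in>UNIV. sign_progress (G x $ i) (\<sigma> x i))
      + (\<integral>\<^sup>+y. ennreal (f y - fstar) \<partial>signsgd_step Q \<gamma> x)
    \<le> ennreal (f x - fstar) + ennreal (\<gamma>\<^sup>2 * (\<Sum>i\<in>UNIV. L i) / 2)"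
proof -
  note Q = prob_algebra_memD[OF Qx]
  interpret prob_space "Q x" by (rule Q(1))
  define \<Phi> where "\<Phi> = (\<Sum>i\<in>UNIV. sign_progress (G x $ i) (\<sigma> x i))"
  define C where "C = \<gamma>\<^sup>2 * (\<Sum>i\<in>UNIV. L i) / 2"
  define E where "E = (\<Sum>i\<in>UNIV. G x $ i * (\<integral>v. sgn (v $ i) \<partial>Q x))"
  define r where "r v = f x - fstar - \<gamma> * (\<Sum>i\<in>UNIV. G x $ i * sgn (v $ i)) + C" for v
  have C: "C \<ge> 0" using L_nonneg by (simp add: C_def sum_nonneg)
  have \<Phi>: "\<Phi> \<ge> 0" using \<sigma> by (simp add: \<Phi>_def sign_progress_def sum_nonneg)
  have step_meas: "(\<lambda>v. x - \<gamma> *\<^sub>R sgn_vec v) \<in> Q x \<rightarrow>\<^sub>M borel"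
    by (simp add: measurable_cong_sets[OF Q(2) refl])
  have sgn_int: "integrable (Q x) (\<lambda>v. sgn (v $ i))" for i
    by (rule integrable_const_bound[where B=1]) (auto simp: measurable_cong_sets[OF Q(2) refl] sgn_real_def)
  have r_ge: "f (x - \<gamma> *\<^sub>R sgn_vec v) - fstar \<le> r v" for v
    using smooth_sign_step_le[OF L_nonneg smooth, of \<gamma> v] unfolding r_def C_def by linarith
  have r_nonneg: "0 \<le> r v" for v using r_ge[of v] lower[of "x - \<gamma> *\<^sub>R sgn_vec v"] by linarith
  have "(\<integral>\<^sup>+y. ennreal (f y - fstar) \<partial>signsgd_step Q \<gamma> x)
      = (\<integral>\<^sup>+v. ennreal (f (x - \<gamma> *\<^sub>R sgn_vec v) - fstar) \<partial>Q x)"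
    unfolding signsgd_step_def using f by (simp add: nn_integral_distr[OF step_meas])
  also have "\<dots> \<le> (\<integral>\<^sup>+v. ennreal (r v) \<partial>Q x)"
    by (intro nn_integral_mono ennreal_leI r_ge)
  also have "\<dots> = ennreal (\<integral>v. r v \<partial>Q x)"
    unfolding r_def using sgn_int r_nonneg[unfolded r_def]
    by (intro nn_integral_eq_integral) auto
  also have int_r: "(\<integral>v. r v \<partial>Q x) = f x - fstar - \<gamma> * E + C"
    unfolding r_def E_def using sgn_int by (simp add: prob_space)
  finally have next_le: "(\<integral>\<^sup>+y. ennreal (f y - fstar) \<partial>signsgd_step Q \<gamma> x)
      \<le> ennreal (f x - fstar - \<gamma> * E + C)" .
  have "1/3 * \<Phi> \<le> E"
    unfolding \<Phi>_def E_def sum_distrib_left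
    using symmetric_unimodal_coordinate_sgn_bound[OF Q uni sym \<sigma> mean sq var] by (rule sum_mono)
  then have "\<gamma> / 3 * \<Phi> + (f x - fstar - \<gamma> * E + C) \<le> f x - fstar + C"
    using \<gamma> mult_left_mono[of "1/3 * \<Phi>" E \<gamma>] by simp
  moreover have "0 \<le> f x - fstar - \<gamma> * E + C"
    unfolding int_r[symmetric] using r_nonneg by simp
  ultimately have sum_le: "ennreal (\<gamma> / 3 * \<Phi>) + ennreal (f x - fstar - \<gamma> * E + C)
      \<le> ennreal (f x - fstar) + ennreal C"
    using \<gamma> \<Phi> C lower[of x] by (simp add: ennreal_plus[symmetric] del: ennreal_plus)
  have "ennreal (\<gamma> / 3) * ennreal \<Phi> + (\<integral>\<^sup>+y. ennreal (f y - fstar) \<partial>signsgd_step Q \<gamma> x)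
      \<le> ennreal (\<gamma> / 3 * \<Phi>) + ennreal (f x - fstar - \<gamma> * E + C)"
    using \<gamma> \<Phi> next_le by (simp add: ennreal_mult[symmetric] add_left_mono)
  also note sum_le
  finally show ?thesis unfolding \<Phi>_def C_def .
qed

text \<open>P need not be measurable: the progress measure of the main theorem involves \<sigma> and the
  gradient, on which no measurability is assumed.\<close>
lemma ennreal_mult_nn_integral_le:
  assumes c: "c > 0" and R: "R \<in> borel_measurable M"
    and le: "\<And>x. x \<in> space M \<Longrightarrow> ennreal c * P x \<le> R x"
  shows "ennreal c * (\<integral>\<^sup>+x. P x \<partial>M) \<le> (\<integral>\<^sup>+x. R x \<partial>M)"
proof -
  have inv: "ennreal c * ennreal (1 / c) = 1" using c by (simp add: ennreal_mult[symmetric])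
  have "P x \<le> ennreal (1 / c) * R x" if "x \<in> space M" for x
  proof -
    have "P x = ennreal (1 / c) * (ennreal c * P x)"
      using inv by (simp add: mult.assoc[symmetric] mult.commute)
    also have "\<dots> \<le> ennreal (1 / c) * R x" using le[OF that] by (rule mult_left_mono) simp
    finally show ?thesis .
  qed
  then have "(\<integral>\<^sup>+x. P x \<partial>M) \<le> ennreal (1 / c) * (\<integral>\<^sup>+x. R x \<partial>M)"
    using nn_integral_mono nn_integral_cmult[OF R] by metis
  then have "ennreal c * (\<integral>\<^sup>+x. P x \<partial>M) \<le> ennreal c * ennreal (1 / c) * (\<integral>\<^sup>+x. R x \<partial>M)"
    by (simp add: mult_left_mono mult.assoc)
  then show ?thesis using inv by simp
qed

lemma nn_integral_markov_descent:
  fixes S :: "'a \<Rightarrow> 'a measure" and \<mu> :: "nat \<Rightarrow> 'a measure"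
  assumes S: "S \<in> M \<rightarrow>\<^sub>M subprob_algebra M"
    and \<mu>: "\<And>k. \<mu> k \<in> space (prob_algebra M)" and \<mu>_Suc: "\<And>k. \<mu> (Suc k) = \<mu> k \<bind> S"
    and D: "D \<in> borel_measurable M" and c: "c > 0"
    and descent: "\<And>x. x \<in> space M \<Longrightarrow> ennreal c * P x + (\<integral>\<^sup>+y. D y \<partial>S x) \<le> D x + C"
  shows "ennreal c * (\<Sum>k<n. \<integral>\<^sup>+x. P x \<partial>\<mu> k) + (\<integral>\<^sup>+x. D x \<partial>\<mu> n)
    \<le> (\<integral>\<^sup>+x. D x \<partial>\<mu> 0) + of_nat n * C"
proof (induction n)
  case (Suc n)
  define B where "B x = (\<integral>\<^sup>+y. D y \<partial>S x)" for x
  \<comment> \<open>Solving the descent inequality for c P gives a measurable majorant.\<close>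
  define R where "R x = D x + C - B x" for x
  have B: "B \<in> borel_measurable M"
    unfolding B_def by (rule measurable_compose[OF S nn_integral_measurable_subprob_algebra[OF D]])
  have R: "R \<in> borel_measurable M" unfolding R_def using D B by measurable
  have RB: "R x + B x = D x + C" and PR: "ennreal c * P x \<le> R x" if "x \<in> space M" for x
  proof -
    have "B x \<le> D x + C" using descent[OF that] unfolding B_def by (rule order_trans[rotated]) simp
    then show "R x + B x = D x + C" unfolding R_def by (rule diff_add_cancel_ennreal)
    show "ennreal c * P x \<le> R x" using descent[OF that] by (simp add: R_def B_def ennreal_le_minus_iff)
  qed
  have sets: "sets (\<mu> n) = sets M" and prob: "prob_space (\<mu> n)"
    using \<mu>[of n] by (simp_all add: space_prob_algebra)
  note meas = measurable_cong_sets[OF sets refl]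
  have "ennreal c * (\<integral>\<^sup>+x. P x \<partial>\<mu> n) + (\<integral>\<^sup>+x. D x \<partial>\<mu> (Suc n))
      \<le> (\<integral>\<^sup>+x. R x \<partial>\<mu> n) + (\<integral>\<^sup>+x. B x \<partial>\<mu> n)"
    unfolding \<mu>_Suc B_def using sets_eq_imp_space_eq[OF sets] S D R PR
    by (auto intro!: add_right_mono ennreal_mult_nn_integral_le[OF c] simp: nn_integral_bind meas)
  also have "\<dots> = (\<integral>\<^sup>+x. D x + C \<partial>\<mu> n)"
    using R B RB sets_eq_imp_space_eq[OF sets]
    by (simp add: nn_integral_add[symmetric] meas) (intro nn_integral_cong; simp)
  also have "\<dots> = (\<integral>\<^sup>+x. D x \<partial>\<mu> n) + C"
    using D prob by (simp add: nn_integral_add meas prob_space.emeasure_space_1)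
  finally have step: "ennreal c * (\<integral>\<^sup>+x. P x \<partial>\<mu> n) + (\<integral>\<^sup>+x. D x \<partial>\<mu> (Suc n))
      \<le> (\<integral>\<^sup>+x. D x \<partial>\<mu> n) + C" .
  have "ennreal c * (\<Sum>k<Suc n. \<integral>\<^sup>+x. P x \<partial>\<mu> k) + (\<integral>\<^sup>+x. D x \<partial>\<mu> (Suc n))
      = ennreal c * (\<Sum>k<n. \<integral>\<^sup>+x. P x \<partial>\<mu> k)
        + (ennreal c * (\<integral>\<^sup>+x. P x \<partial>\<mu> n) + (\<integral>\<^sup>+x. D x \<partial>\<mu> (Suc n)))"
    by (simp add: distrib_left add.assoc)
  also have "\<dots> \<le> ennreal c * (\<Sum>k<n. \<integral>\<^sup>+x. P x \<partial>\<mu> k) + ((\<integral>\<^sup>+x. D x \<partial>\<mu> n) + C)"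
    using step by (rule add_left_mono)
  also have "\<dots> \<le> (\<integral>\<^sup>+x. D x \<partial>\<mu> 0) + of_nat n * C + C"
    using add_right_mono[OF Suc.IH, of C] by (simp add: add.assoc)
  also have "\<dots> = (\<integral>\<^sup>+x. D x \<partial>\<mu> 0) + of_nat (Suc n) * C"
    by (simp add: distrib_right add.assoc)
  finally show ?case .
qed simp

lemma affine_majorant_bounded_below_imp_zero:
  fixes g x :: "'a::real_inner"
  assumes lower: "\<And>y. fstar \<le> f y" and major: "\<And>y. f y \<le> f x + g \<bullet> (y - x)"
  shows "g = 0"
proof (rule ccontr)
  assume "g \<noteq> 0"
  define t where "t = (f x - fstar + 1) / (g \<bullet> g)"
  have "g \<bullet> ((x - t *\<^sub>R g) - x) = - (f x - fstar + 1)"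
    using \<open>g \<noteq> 0\<close> by (simp add: t_def)
  then show False using lower[of "x - t *\<^sub>R g"] major[of "x - t *\<^sub>R g"] by simp
qed

lemma sum_sign_progress_split:
  fixes g s :: "'n::finite \<Rightarrow> real"
  shows "(\<Sum>i\<in>{i. s i < sqrt 3 / 2 * \<bar>g i\<bar>}. \<bar>g i\<bar>) + (\<Sum>i\<in>UNIV - {i. s i < sqrt 3 / 2 * \<bar>g i\<bar>}. (g i)\<^sup>2 / s i)
    = (\<Sum>i\<in>UNIV. sign_progress (g i) (s i))"
  unfolding sign_progress_def sum.If_cases[OF finite] by (simp add: Diff_eq)

lemma signsgd_rate_bound:
  fixes D0 \<Lambda> \<gamma> :: real and X :: ennreal
  assumes D0: "D0 > 0" and \<Lambda>: "\<Lambda> > 0" and K: "K > 0"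
    and \<gamma>: "\<gamma> = sqrt (2 * D0 / (\<Lambda> * K))"
    and X: "ennreal (\<gamma> / 3) * X \<le> ennreal D0 + of_nat K * ennreal (\<gamma>\<^sup>2 * \<Lambda> / 2)"
  shows "ennreal (1 / K) * X \<le> ennreal (5 * sqrt (\<Lambda> * D0 / K))"
proof -
  have \<gamma>_pos: "\<gamma> > 0" using D0 \<Lambda> K by (simp add: \<gamma>)
  have "real K * (\<gamma>\<^sup>2 * \<Lambda> / 2) = D0" using D0 \<Lambda> K by (simp add: \<gamma>)
  then have "of_nat K * ennreal (\<gamma>\<^sup>2 * \<Lambda> / 2) = ennreal D0"
    using \<Lambda> by (simp add: ennreal_of_nat_eq_real_of_nat ennreal_mult[symmetric])
  then have "ennreal D0 + of_nat K * ennreal (\<gamma>\<^sup>2 * \<Lambda> / 2) = ennreal (2 * D0)"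
    using D0 by (simp add: ennreal_plus[symmetric] del: ennreal_plus)
  with X have X': "ennreal (\<gamma> / 3) * X \<le> ennreal (2 * D0)" by simp
  have "ennreal (1 / K) * X = ennreal (3 / (\<gamma> * K)) * (ennreal (\<gamma> / 3) * X)"
    using \<gamma>_pos K by (simp add: mult.assoc[symmetric] ennreal_mult[symmetric])
  also have "\<dots> \<le> ennreal (3 / (\<gamma> * K)) * ennreal (2 * D0)"
    using X' by (rule mult_left_mono) simp
  also have "\<dots> = ennreal (6 * D0 / (\<gamma> * K))"
    using \<gamma>_pos K D0 by (simp add: ennreal_mult[symmetric])
  also have "6 * D0 / (\<gamma> * K) = 3 * sqrt 2 * sqrt (\<Lambda> * D0 / K)"
  proof -
    define Z where "Z = sqrt (\<Lambda> * D0 / K)"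
    have "\<gamma> * Z = sqrt (2 * (D0 / K)\<^sup>2)"
      using \<Lambda> K unfolding \<gamma> Z_def real_sqrt_mult[symmetric] by (simp add: field_simps power2_eq_square)
    also have "\<dots> = sqrt 2 * D0 / K" using D0 K by (simp add: real_sqrt_mult)
    finally have "Z * (\<gamma> * K) = sqrt 2 * D0" using K by (simp add: field_simps)
    then have "3 * sqrt 2 * Z * (\<gamma> * K) = 3 * (sqrt 2 * sqrt 2) * D0"
      by (metis mult.assoc)
    then show ?thesis using \<gamma>_pos K by (simp add: divide_eq_eq Z_def)
  qed
  also have "\<dots> \<le> 5 * sqrt (\<Lambda> * D0 / K)"
  proof -
    have "sqrt 2 < (5/3::real)" by (rule real_less_lsqrt) (simp_all add: power2_eq_square)
    then show ?thesis using \<Lambda> D0 by (intro mult_right_mono) auto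
  qed
  finally show ?thesis by (simp add: ennreal_leI)
qed

lemma signsgd_progress_sum_le:
  fixes f :: "real^'n \<Rightarrow> real" and G :: "real^'n \<Rightarrow> real^'n"
    and Q :: "real^'n \<Rightarrow> (real^'n) measure" and \<sigma> :: "real^'n \<Rightarrow> 'n \<Rightarrow> real"
  assumes lower: "\<And>y. fstar \<le> f y" and f: "f \<in> borel_measurable borel"
    and L_nonneg: "\<And>i. 0 \<le> L i"
    and smooth: "\<And>x y. f y \<le> f x + G x \<bullet> (y - x) + (\<Sum>i\<in>UNIV. L i / 2 * (y $ i - x $ i)\<^sup>2)"
    and kernel: "Q \<in> borel \<rightarrow>\<^sub>M prob_algebra borel"
    and uni: "\<And>x i. unimodal (distr (Q x) borel (\<lambda>v. v $ i))"
    and sym: "\<And>x i. symmetric_about (distr (Q x) borel (\<lambda>v. v $ i)) (G x $ i)"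
    and \<sigma>: "\<And>x i. \<sigma> x i \<ge> 0" and mean: "\<And>x i. (\<integral>v. v $ i \<partial>Q x) = G x $ i"
    and sq: "\<And>x i. integrable (Q x) (\<lambda>v. (v $ i)\<^sup>2)"
    and var: "\<And>x i. (\<integral>v. (v $ i - G x $ i)\<^sup>2 \<partial>Q x) = (\<sigma> x i)\<^sup>2"
    and \<gamma>: "\<gamma> > 0"
  shows "ennreal (\<gamma> / 3) * (\<Sum>k<n. \<integral>\<^sup>+x. ennreal (\<Sum>i\<in>UNIV. sign_progress (G x $ i) (\<sigma> x i))
      \<partial>signsgd_dist Q \<gamma> x0 k)
    \<le> ennreal (f x0 - fstar) + of_nat n * ennreal (\<gamma>\<^sup>2 * (\<Sum>i\<in>UNIV. L i) / 2)"
proof -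
  have "ennreal (\<gamma> / 3) * (\<Sum>k<n. \<integral>\<^sup>+x. ennreal (\<Sum>i\<in>UNIV. sign_progress (G x $ i) (\<sigma> x i))
      \<partial>signsgd_dist Q \<gamma> x0 k) + (\<integral>\<^sup>+x. ennreal (f x - fstar) \<partial>signsgd_dist Q \<gamma> x0 n)
    \<le> (\<integral>\<^sup>+x. ennreal (f x - fstar) \<partial>signsgd_dist Q \<gamma> x0 0)
      + of_nat n * ennreal (\<gamma>\<^sup>2 * (\<Sum>i\<in>UNIV. L i) / 2)"
  proof (rule nn_integral_markov_descent)
    show "signsgd_step Q \<gamma> \<in> borel \<rightarrow>\<^sub>M subprob_algebra borel"
      using signsgd_step_kernel[OF kernel] by (rule measurable_prob_algebraD)
    show "ennreal (\<gamma> / 3) * ennreal (\<Sum>i\<in>UNIV. sign_progress (G x $ i) (\<sigma> x i))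
        + (\<integral>\<^sup>+y. ennreal (f y - fstar) \<partial>signsgd_step Q \<gamma> x)
      \<le> ennreal (f x - fstar) + ennreal (\<gamma>\<^sup>2 * (\<Sum>i\<in>UNIV. L i) / 2)" for x
      using \<gamma> measurable_space[OF kernel, of x]
      by (intro signsgd_step_descent[OF lower f L_nonneg smooth _ uni sym \<sigma> mean sq var]) auto
  qed (use \<gamma> f signsgd_dist_prob_algebra[OF kernel] in auto)
  moreover have "(\<integral>\<^sup>+x. ennreal (f x - fstar) \<partial>signsgd_dist Q \<gamma> x0 0) = ennreal (f x0 - fstar)"
    using f by (simp add: nn_integral_return)
  ultimately show ?thesis by (simp add: add_increasing2 order_trans[rotated])
qed

theorem mainTheorem14:
  fixes f :: "real ^ 'n \<Rightarrow> real"
    and G :: "real ^ 'n \<Rightarrow> real ^ 'n"          \<comment> \<open>true gradient g(x)\<close>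
    and L :: "'n \<Rightarrow> real"
    and fstar :: real
    and Q :: "real ^ 'n \<Rightarrow> (real ^ 'n) measure"  \<comment> \<open>law of the estimator \<open>\<hat>g(x)\<close>\<close>
    and \<sigma> :: "real ^ 'n \<Rightarrow> 'n \<Rightarrow> real"
    and x0 :: "real ^ 'n"
    and K :: nat
  assumes lower: "\<And>x. f x \<ge> fstar"
    and grad: "\<And>x. (f has_derivative (\<lambda>h. G x \<bullet> h)) (at x)"
    and L_nonneg: "\<And>i. L i \<ge> 0"
    and smooth: "\<And>x y. f y \<le> f x + G x \<bullet> (y - x) + (\<Sum>i\<in>UNIV. L i / 2 * (y $ i - x $ i)^2)"
    and kernel: "Q \<in> borel \<rightarrow>\<^sub>M prob_algebra borel"
    and unbiased: "\<And>x i. integrable (Q x) (\<lambda>v. v $ i) \<and> (\<integral>v. v $ i \<partial>Q x) = G x $ i"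
    and unimod: "\<And>x i. unimodal (distr (Q x) borel (\<lambda>v. v $ i))"
    and symm: "\<And>x i. symmetric_about (distr (Q x) borel (\<lambda>v. v $ i)) (G x $ i)"
    and sigma_nonneg: "\<And>x i. \<sigma> x i \<ge> 0"
    and variance: "\<And>x i. integrable (Q x) (\<lambda>v. (v $ i)^2) \<and>
                          (\<integral>v. (v $ i - G x $ i)^2 \<partial>Q x) = (\<sigma> x i)^2"
    and K_pos: "K \<ge> 1"
    and gap: "f x0 > fstar"
  shows
    "(let d = real CARD('n);
          Lbar = (\<Sum>i\<in>UNIV. L i) / d;
          \<gamma> = sqrt (2 * (f x0 - fstar) / (d * Lbar * real K));
          H = (\<lambda>x. {i. \<sigma> x i < sqrt 3 / 2 * \<bar>G x $ i\<bar>});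
          \<Phi> = (\<lambda>x. (\<Sum>i\<in>H x. \<bar>G x $ i\<bar>) + (\<Sum>i\<in>UNIV - H x. (G x $ i)^2 / \<sigma> x i))
      in ennreal (1 / real K) * (\<Sum>k<K. \<integral>\<^sup>+ x. ennreal (\<Phi> x) \<partial>signsgd_dist Q \<gamma> x0 k)
           \<le> ennreal (5 * sqrt (d * Lbar * (f x0 - fstar) / real K)))"
proof -
  define \<Lambda> where "\<Lambda> = (\<Sum>i\<in>UNIV. L i)"
  define D0 where "D0 = f x0 - fstar"
  define \<gamma> where "\<gamma> = sqrt (2 * D0 / (\<Lambda> * real K))"
  define \<Phi> where "\<Phi> x = (\<Sum>i\<in>UNIV. sign_progress (G x $ i) (\<sigma> x i))" for x
  have "ennreal (1 / real K) * (\<Sum>k<K. \<integral>\<^sup>+x. ennreal (\<Phi> x) \<partial>signsgd_dist Q \<gamma> x0 k)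
      \<le> ennreal (5 * sqrt (\<Lambda> * D0 / real K))"
  proof (cases "\<Lambda> = 0")
    case True
    \<comment> \<open>Then \<gamma> = 0 by division by zero and the bound is 0; f has an affine majorant at every
      point and is bounded below, so the gradient vanishes everywhere.\<close>
    then have "L i = 0" for i using L_nonneg by (simp add: \<Lambda>_def sum_nonneg_eq_0_iff)
    then have "G x = 0" for x
      using lower smooth[where x=x] by (intro affine_majorant_bounded_below_imp_zero[where f=f]) auto
    then show ?thesis by (simp add: \<Phi>_def)
  next
    case False
    then have \<Lambda>_pos: "\<Lambda> > 0"
      using L_nonneg by (simp add: \<Lambda>_def order.not_eq_order_implies_strict sum_nonneg)
    have D0_pos: "D0 > 0" using gap by (simp add: D0_def)
    have K: "real K > 0" using K_pos by simp
    then have \<gamma>_pos: "\<gamma> > 0" using \<Lambda>_pos D0_pos by (simp add: \<gamma>_def)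
    have f: "f \<in> borel_measurable borel"
      using grad has_derivative_continuous
      by (intro borel_measurable_continuous_onI continuous_at_imp_continuous_on) blast
    have "ennreal (\<gamma> / 3) * (\<Sum>k<K. \<integral>\<^sup>+x. ennreal (\<Phi> x) \<partial>signsgd_dist Q \<gamma> x0 k)
        \<le> ennreal D0 + of_nat K * ennreal (\<gamma>\<^sup>2 * \<Lambda> / 2)"
      unfolding \<Phi>_def \<Lambda>_def D0_def using unbiased variance \<gamma>_pos
      by (intro signsgd_progress_sum_le[OF lower f L_nonneg smooth kernel unimod symm sigma_nonneg]) auto
    then show ?thesis using D0_pos \<Lambda>_pos K_pos by (intro signsgd_rate_bound[OF _ _ _ \<gamma>_def]) auto
  qed
  moreover have "real CARD('n) * (\<Lambda> / real CARD('n)) = \<Lambda>" by simp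
  ultimately show ?thesis
    unfolding Let_def \<Phi>_def D0_def \<gamma>_def \<Lambda>_def sum_sign_progress_split[where g="\<lambda>i. G _ $ i"] by simp
qed

end
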